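(* The Volterra operator algebra $\mathcal A_V$ does not admit a gauge action.
   Context: $V$ is the Volterra operator on $L^2[0,1]$, $V\xi(x)=\int_0^x\xi(t)\,dt$, and $\mathcal A_V$ is the operator-norm closure in $\mathcal B(L^2[0,1])$ of the polynomials $p(V)$ with $p(0)=0$. A gauge action on $\mathcal A_V$ is a group homomorphism $\lambda\mapsto\gamma_\lambda$ from the unit circle $\mathbb T$ into the group of isometric algebra automorphisms of $\mathcal A_V$ such that $\gamma_\lambda(V)=\lambda V$ for all $\lambda\in\mathbb T$ and $\lambda\mapsto\gamma_\lambda(S)$ is norm continuous for every $S\in\mathcal A_V$. *)

theory Defs
  imports "HOL-Analysis.Analysis" "HOL-Computational_Algebra.Polynomial"
begin

text \<open>Elements of L^2[0,1] are represented by functions real => complex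
  (representatives); equality in L^2 is equality almost everywhere on [0,1].
  Operators are represented by maps on representatives; two operators are
  identified when they agree (a.e.) on every element of L^2.\<close>

type_synonym fn = "real \<Rightarrow> complex"
type_synonym op = "fn \<Rightarrow> fn"

definition M01 :: "real measure" where
  "M01 = restrict_space lborel {0..1}"

definition L2 :: "fn set" where
  "L2 = {f. f \<in> borel_measurable M01 \<and> integrable M01 (\<lambda>x. (cmod (f x))\<^sup>2)}"

definition l2norm :: "fn \<Rightarrow> real" where
  "l2norm f = sqrt (\<integral>x. (cmod (f x))\<^sup>2 \<partial>M01)"

definition opnorm :: "op \<Rightarrow> real" where
  "opnorm T = Sup {l2norm (T f) | f. f \<in> L2 \<and> l2norm f \<le> 1}"

definition opeq :: "op \<Rightarrow> op \<Rightarrow> bool" where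
  "opeq S T \<longleftrightarrow> (\<forall>f\<in>L2. AE x in M01. S f x = T f x)"

definition op_add :: "op \<Rightarrow> op \<Rightarrow> op" where
  "op_add S T = (\<lambda>f x. S f x + T f x)"

definition op_scale :: "complex \<Rightarrow> op \<Rightarrow> op" where
  "op_scale c S = (\<lambda>f x. c * S f x)"

definition volterra :: op where
  "volterra f = (\<lambda>x. LINT t:{0..x}|lborel. f t)"

definition poly_op :: "complex poly \<Rightarrow> op" where
  "poly_op p f = (\<lambda>x. \<Sum>k\<le>degree p. coeff p k * (volterra ^^ k) f x)"

definition AV :: "op set" where
  "AV = {S. (\<forall>f\<in>L2. S f \<in> L2)
          \<and> (\<forall>f\<in>L2. \<forall>g\<in>L2. (AE x in M01. f x = g x) \<longrightarrow> (AE x in M01. S f x = S g x))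
          \<and> (\<forall>\<epsilon>>0. \<exists>p. poly p 0 = 0 \<and>
                (\<forall>f\<in>L2. l2norm (\<lambda>x. S f x - poly_op p f x) \<le> \<epsilon> * l2norm f))}"

definition gauge_action :: "(complex \<Rightarrow> op \<Rightarrow> op) \<Rightarrow> bool" where
  "gauge_action \<gamma> \<longleftrightarrow>
    (\<forall>z. cmod z = 1 \<longrightarrow>
        (\<forall>S\<in>AV. \<gamma> z S \<in> AV)
      \<and> (\<forall>S\<in>AV. \<forall>T\<in>AV. opeq S T \<longrightarrow> opeq (\<gamma> z S) (\<gamma> z T))
      \<and> (\<forall>S\<in>AV. \<forall>T\<in>AV. opeq (\<gamma> z (op_add S T)) (op_add (\<gamma> z S) (\<gamma> z T)))
      \<and> (\<forall>c. \<forall>S\<in>AV. opeq (\<gamma> z (op_scale c S)) (op_scale c (\<gamma> z S)))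
      \<and> (\<forall>S\<in>AV. \<forall>T\<in>AV. opeq (\<gamma> z (S \<circ> T)) (\<gamma> z S \<circ> \<gamma> z T))
      \<and> (\<forall>S\<in>AV. \<forall>T\<in>AV. opeq (\<gamma> z S) (\<gamma> z T) \<longrightarrow> opeq S T)
      \<and> (\<forall>T\<in>AV. \<exists>S\<in>AV. opeq (\<gamma> z S) T)
      \<and> (\<forall>S\<in>AV. opnorm (\<gamma> z S) = opnorm S)
      \<and> opeq (\<gamma> z volterra) (op_scale z volterra))
    \<and> (\<forall>z w. cmod z = 1 \<longrightarrow> cmod w = 1 \<longrightarrow>
          (\<forall>S\<in>AV. opeq (\<gamma> (z * w) S) (\<gamma> z (\<gamma> w S))))
    \<and> (\<forall>S\<in>AV. \<forall>z0. cmod z0 = 1 \<longrightarrow>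
          (\<forall>\<epsilon>>0. \<exists>\<delta>>0. \<forall>z. cmod z = 1 \<and> cmod (z - z0) < \<delta> \<longrightarrow>
              opnorm (op_add (\<gamma> z S) (op_scale (-1) (\<gamma> z0 S))) < \<epsilon>))"

end

theory Submission
  imports Defs
begin

text \<open>Only the automorphism \<gamma>(-1) is needed. It is linear, multiplicative and isometric and
  sends V to -V, so it carries V - V^2 to (-V) - (-V)^2 = -(V + V^2), and these two operators
  would have equal norms. They do not: the kernel 1 - (x - t) of V - V^2 takes values in [0,1],
  which gives ||V - V^2||^2 \<le> 7/12, whereas (V + V^2) 1 = x + x^2/2 has squared norm 19/30.\<close>

lemma space_M01 [simp]: "space M01 = {0..1}"
  by (simp add: M01_def space_restrict_space)

lemma emeasure_M01: "emeasure M01 {0..1} = 1"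
  unfolding M01_def by (subst emeasure_restrict_space) auto

lemma finite_measure_M01: "finite_measure M01"
  by (rule finite_measureI) (simp add: emeasure_M01)

lemma measure_M01 [simp]: "measure M01 {0..1} = 1"
  by (simp add: measure_def emeasure_M01)

lemma integral_M01_eq_lborel: "(\<integral>x. g x \<partial>M01) = (\<integral>x. g x * indicator {0..1} x \<partial>lborel)"
  for g :: "real \<Rightarrow> real"
  unfolding M01_def by (subst integral_restrict_space) (auto simp: mult.commute)

lemma measurable_M01_of_borel: "g \<in> borel_measurable borel \<Longrightarrow> g \<in> borel_measurable M01"
  unfolding M01_def by (rule measurable_restrict_space1) simp

lemma integral_Icc_indicator: "(\<integral>y. indicator {a..b::real} y \<partial>lborel) = (if a \<le> b then b - a else 0)"
  by (cases "a \<le> b") auto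

lemma L2_measurable: "f \<in> L2 \<Longrightarrow> f \<in> borel_measurable M01"
  by (simp add: L2_def)

lemma L2_integrable: assumes "f \<in> L2" shows "integrable M01 f"
proof (rule Bochner_Integration.integrable_bound[OF _ L2_measurable[OF assms]])
  show "integrable M01 (\<lambda>x. 1 + (cmod (f x))\<^sup>2)"
    using assms finite_measure.integrable_const[OF finite_measure_M01]
    by (intro Bochner_Integration.integrable_add) (auto simp: L2_def)
  have "norm (f x) \<le> 1 + (cmod (f x))\<^sup>2" for x
  proof -
    have "2 * cmod (f x) \<le> 1 + (cmod (f x))\<^sup>2"
      using zero_le_power2[of "cmod (f x) - 1"] by (simp add: power2_diff)
    then show ?thesis using norm_ge_zero[of "f x"] by linarith
  qed
  then show "AE x in M01. norm (f x) \<le> norm (1 + (cmod (f x))\<^sup>2)"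
    by (intro AE_I2) simp
qed

lemma L2_of_bounded:
  assumes "h \<in> borel_measurable M01" "\<forall>x\<in>{0..1}. cmod (h x) \<le> B"
  shows "h \<in> L2"
proof -
  interpret finite_measure M01 by (rule finite_measure_M01)
  have "integrable M01 (\<lambda>x. (cmod (h x))\<^sup>2)"
  proof (rule integrable_const_bound[where B="B\<^sup>2"])
    show "AE x in M01. norm ((cmod (h x))\<^sup>2) \<le> B\<^sup>2"
      using assms(2) by (intro AE_I2) (auto intro!: power_mono)
  qed (use assms(1) in measurable)
  then show ?thesis using assms(1) by (simp add: L2_def)
qed

lemma L2_cmult: assumes "h \<in> L2" shows "(\<lambda>x. c * h x) \<in> L2"
proof -
  have [measurable]: "h \<in> borel_measurable M01" using assms by (rule L2_measurable)
  have "integrable M01 (\<lambda>x. (cmod c)\<^sup>2 * (cmod (h x))\<^sup>2)" using assms by (simp add: L2_def)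
  then show ?thesis by (simp add: L2_def norm_mult power_mult_distrib)
qed

lemma L2_add: assumes "a \<in> L2" "b \<in> L2" shows "(\<lambda>x. a x + b x) \<in> L2"
proof -
  have [measurable]: "a \<in> borel_measurable M01" "b \<in> borel_measurable M01"
    using assms by (auto simp: L2_def)
  have "integrable M01 (\<lambda>x. 2 * (cmod (a x))\<^sup>2 + 2 * (cmod (b x))\<^sup>2)"
    using assms by (simp add: L2_def)
  then have "integrable M01 (\<lambda>x. (cmod (a x + b x))\<^sup>2)"
  proof (rule Bochner_Integration.integrable_bound)
    show "(\<lambda>x. (cmod (a x + b x))\<^sup>2) \<in> borel_measurable M01" by measurable
    have "(cmod (a x + b x))\<^sup>2 \<le> 2 * (cmod (a x))\<^sup>2 + 2 * (cmod (b x))\<^sup>2" for x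
    proof -
      have "cmod (a x + b x) \<le> cmod (a x) + cmod (b x)" by (rule norm_triangle_ineq)
      then have "(cmod (a x + b x))\<^sup>2 \<le> (cmod (a x) + cmod (b x))\<^sup>2" by (simp add: power_mono)
      also have "\<dots> \<le> 2 * (cmod (a x))\<^sup>2 + 2 * (cmod (b x))\<^sup>2"
        using zero_le_power2[of "cmod (a x) - cmod (b x)"] by (simp add: power2_diff power2_sum)
      finally show ?thesis .
    qed
    then show "AE x in M01. norm ((cmod (a x + b x))\<^sup>2) \<le> norm (2 * (cmod (a x))\<^sup>2 + 2 * (cmod (b x))\<^sup>2)"
      by (intro AE_I2) simp
  qed
  then show ?thesis by (simp add: L2_def)
qed

lemma L2_zero: "(\<lambda>x. 0) \<in> L2"
  by (simp add: L2_def)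

lemma L2_sum: "(\<And>k. k \<in> K \<Longrightarrow> h k \<in> L2) \<Longrightarrow> (\<lambda>x. \<Sum>k\<in>K. h k x) \<in> L2"
proof (induction K rule: infinite_finite_induct)
  case (infinite K)
  then show ?case by (simp add: L2_zero)
next
  case empty
  then show ?case by (simp add: L2_zero)
next
  case (insert k K)
  then have "h k \<in> L2" "(\<lambda>x. \<Sum>k\<in>K. h k x) \<in> L2" by simp_all
  then show ?case using insert.hyps by (simp add: L2_add)
qed

lemma l2norm_nonneg: "0 \<le> l2norm f"
  unfolding l2norm_def by (simp add: Bochner_Integration.integral_nonneg)

lemma l2norm_cong_AE:
  assumes "f \<in> L2" "g \<in> L2" "AE x in M01. f x = g x"
  shows "l2norm f = l2norm g"
proof -
  have [measurable]: "f \<in> borel_measurable M01" "g \<in> borel_measurable M01"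
    using assms by (auto simp: L2_def)
  have "(\<integral>x. (cmod (f x))\<^sup>2 \<partial>M01) = (\<integral>x. (cmod (g x))\<^sup>2 \<partial>M01)"
    by (rule integral_cong_AE) (use assms(3) in \<open>auto elim: AE_mp\<close>)
  then show ?thesis by (simp add: l2norm_def)
qed

lemma l2norm_le_of_pointwise:
  assumes "h \<in> L2" "\<forall>x\<in>{0..1}. cmod (h x) \<le> b x" "\<forall>x\<in>{0..1}. 0 \<le> b x"
    and "integrable M01 (\<lambda>x. (b x)\<^sup>2)"
  shows "l2norm h \<le> sqrt (\<integral>x. (b x)\<^sup>2 \<partial>M01)"
  unfolding l2norm_def
proof (rule real_sqrt_le_mono, rule integral_mono)
  show "integrable M01 (\<lambda>x. (cmod (h x))\<^sup>2)" using assms(1) by (simp add: L2_def)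
  show "(cmod (h x))\<^sup>2 \<le> (b x)\<^sup>2" if "x \<in> space M01" for x
    using assms(2) that by (auto intro!: power_mono)
qed fact

text \<open>Elements of L2 are only controlled on [0,1]; cutting them off outside [0,1]
  turns integrals over M01 into integrals over lborel.\<close>

definition trunc01 :: "fn \<Rightarrow> fn" where
  "trunc01 f t = indicator {0..1::real} t *\<^sub>R f t"

lemma trunc01_measurable [measurable]: "f \<in> L2 \<Longrightarrow> trunc01 f \<in> borel_measurable lborel"
  using borel_measurable_restrict_space_iff[of "{0..1}" lborel f]
  by (simp add: L2_def M01_def trunc01_def[abs_def])

lemma trunc01_integrable: "f \<in> L2 \<Longrightarrow> integrable lborel (trunc01 f)"
  using L2_integrable integrable_restrict_space[of "{0..1}" lborel f]
  by (simp add: M01_def trunc01_def[abs_def])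

lemma norm_trunc01_sq: "(cmod (trunc01 f t))\<^sup>2 = indicator {0..1::real} t * (cmod (f t))\<^sup>2"
  by (simp add: trunc01_def indicator_def)

lemma norm_trunc01_sq_integrable:
  "f \<in> L2 \<Longrightarrow> integrable lborel (\<lambda>t. (cmod (trunc01 f t))\<^sup>2)"
  using integrable_restrict_space[of "{0..1}" lborel "\<lambda>t. (cmod (f t))\<^sup>2"]
  by (simp add: M01_def norm_trunc01_sq L2_def mult.commute)

lemma integral_norm_trunc01_sq:
  "(\<integral>t. (cmod (trunc01 f t))\<^sup>2 \<partial>lborel) = (\<integral>t. (cmod (f t))\<^sup>2 \<partial>M01)"
  by (simp add: integral_M01_eq_lborel norm_trunc01_sq mult.commute)

lemma pred_snd_in_Icc_fst [measurable]:
  "Measurable.pred (borel \<Otimes>\<^sub>M borel) (\<lambda>x::real \<times> real. snd x \<in> {0..fst x})"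
  unfolding atLeastAtMost_iff by measurable

lemma pred_fst_in_Icc_snd [measurable]:
  "Measurable.pred (borel \<Otimes>\<^sub>M borel) (\<lambda>x::real \<times> real. fst x \<in> {0..snd x})"
  unfolding atLeastAtMost_iff by measurable

lemma volterra_eq_integral_indicator: "volterra g x = (\<integral>t. indicator {0..x} t *\<^sub>R g t \<partial>lborel)"
  by (simp add: volterra_def set_lebesgue_integral_def)

lemma volterra_eq_integral_trunc01:
  "x \<in> {0..1} \<Longrightarrow> volterra f x = (\<integral>t. indicator {0..x} t *\<^sub>R trunc01 f t \<partial>lborel)"
  unfolding volterra_eq_integral_indicator
  by (intro Bochner_Integration.integral_cong) (auto simp: trunc01_def indicator_def)

lemma volterra_uminus: "volterra (\<lambda>y. - g y) x = - volterra g x"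
  by (simp add: volterra_eq_integral_indicator)

lemma volterra_measurable: assumes "f \<in> L2" shows "volterra f \<in> borel_measurable M01"
proof -
  have [measurable]: "trunc01 f \<in> borel_measurable lborel"
    using assms by (rule trunc01_measurable)
  have "(\<lambda>x. \<integral>t. indicator {0..x} t *\<^sub>R trunc01 f t \<partial>lborel) \<in> borel_measurable M01"
    by (intro measurable_M01_of_borel) measurable
  then show ?thesis
    by (rule measurable_cong[THEN iffD1, rotated]) (simp add: volterra_eq_integral_trunc01)
qed

lemma norm_volterra_le:
  assumes "f \<in> L2" "x \<in> {0..1}"
  shows "cmod (volterra f x) \<le> (\<integral>t. cmod (trunc01 f t) \<partial>lborel)"
proof -
  have "cmod (volterra f x) \<le> (\<integral>t. norm (indicator {0..x} t *\<^sub>R trunc01 f t) \<partial>lborel)"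
    unfolding volterra_eq_integral_trunc01[OF assms(2)] by (rule integral_norm_bound)
  also have "\<dots> \<le> (\<integral>t. cmod (trunc01 f t) \<partial>lborel)"
    using trunc01_integrable[OF assms(1)]
    by (intro integral_mono integrable_norm integrable_mult_indicator) (auto simp: indicator_def)
  finally show ?thesis .
qed

lemma volterra_in_L2: assumes "f \<in> L2" shows "volterra f \<in> L2"
  using norm_volterra_le[OF assms] by (blast intro: L2_of_bounded[OF volterra_measurable[OF assms]])

lemma volterra_cong_AE:
  assumes "f \<in> L2" "g \<in> L2" "AE x in M01. f x = g x" "x \<in> {0..1}"
  shows "volterra f x = volterra g x"
proof -
  have "AE t in lborel. t \<in> {0..1} \<longrightarrow> f t = g t"
    using assms(3) unfolding M01_def by (simp add: AE_restrict_space_iff)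
  then have "AE t in lborel. indicator {0..x} t *\<^sub>R trunc01 f t = indicator {0..x} t *\<^sub>R trunc01 g t"
    by eventually_elim (auto simp: trunc01_def indicator_def)
  then have "(\<integral>t. indicator {0..x} t *\<^sub>R trunc01 f t \<partial>lborel) = (\<integral>t. indicator {0..x} t *\<^sub>R trunc01 g t \<partial>lborel)"
    using trunc01_measurable[OF assms(1)] trunc01_measurable[OF assms(2)]
    by (intro integral_cong_AE) auto
  then show ?thesis using assms(4) by (simp add: volterra_eq_integral_trunc01)
qed

lemma volterra_volterra_eq_kernel_integral:
  assumes f: "f \<in> L2" and x: "x \<in> {0..1}"
  shows "volterra (volterra f) x = (\<integral>t. indicator {0..x} t *\<^sub>R (complex_of_real (x - t) * trunc01 f t) \<partial>lborel)"
proof -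
  define G where "G t y = indicator {0..x} y *\<^sub>R indicator {0..y} t *\<^sub>R trunc01 f t" for t y
  have G_alt: "G t y = (indicator {0..x} t * indicator {t..x} y) *\<^sub>R trunc01 f t" for t y
    by (auto simp: G_def indicator_def)
  have [measurable]: "trunc01 f \<in> borel_measurable lborel" using f by measurable
  have inner: "(\<integral>y. G t y \<partial>lborel) = indicator {0..x} t *\<^sub>R (complex_of_real (x - t) * trunc01 f t)" for t
  proof -
    have "(\<integral>y. G t y \<partial>lborel) = (\<integral>y. (indicator {0..x} t * indicator {t..x} y) \<partial>lborel) *\<^sub>R trunc01 f t"
      unfolding G_alt by (rule integral_scaleR_left) (auto simp: emeasure_lborel_Icc_eq)
    then show ?thesis
      by (cases "t \<in> {0..x}") (auto simp: integral_Icc_indicator scaleR_conv_of_real)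
  qed
  have inner_norm: "(\<integral>y. norm (G t y) \<partial>lborel) = indicator {0..x} t * (x - t) * cmod (trunc01 f t)" for t
  proof -
    have "(\<lambda>y. norm (G t y)) = (\<lambda>y. indicator {t..x} y * (indicator {0..x} t * cmod (trunc01 f t)))"
      by (auto simp: G_alt fun_eq_iff indicator_def)
    then show ?thesis
      by (cases "t \<in> {0..x}") (auto simp: integral_Icc_indicator)
  qed
  have bound_integrable: "integrable lborel (\<lambda>t. indicator {0..x} t * (x - t) * cmod (trunc01 f t))"
  proof (rule Bochner_Integration.integrable_bound[OF integrable_norm[OF trunc01_integrable[OF f]]])
    have "norm (indicator {0..x} t * (x - t) * cmod (trunc01 f t)) \<le> norm (trunc01 f t)" for t
      using x by (auto simp: indicator_def abs_mult intro!: mult_left_le_one_le)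
    then show "AE t in lborel. norm (indicator {0..x} t * (x - t) * cmod (trunc01 f t)) \<le> norm (cmod (trunc01 f t))"
      by (intro AE_I2) simp
  qed measurable
  have G_integrable: "integrable (lborel \<Otimes>\<^sub>M lborel) (case_prod G)"
  proof (rule lborel_pair.Fubini_integrable)
    show "case_prod G \<in> borel_measurable (lborel \<Otimes>\<^sub>M lborel)"
      unfolding G_def by measurable
    show "integrable lborel (\<lambda>t. \<integral>y. norm (case_prod G (t, y)) \<partial>lborel)"
      using bound_integrable by (simp add: inner_norm)
    show "AE t in lborel. integrable lborel (\<lambda>y. case_prod G (t, y))"
      by (intro AE_I2) (auto simp: G_alt emeasure_lborel_Icc_eq)
  qed
  have "volterra (volterra f) x = (\<integral>y. (\<integral>t. G t y \<partial>lborel) \<partial>lborel)"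
    unfolding volterra_eq_integral_indicator[of "volterra f"]
    by (intro Bochner_Integration.integral_cong refl)
       (use x in \<open>auto simp: G_def volterra_eq_integral_trunc01 indicator_def\<close>)
  also have "\<dots> = (\<integral>t. (\<integral>y. G t y \<partial>lborel) \<partial>lborel)"
    by (rule lborel_pair.Fubini_integral[OF G_integrable])
  finally show ?thesis by (simp add: inner)
qed

lemma integrable_kernel_trunc01:
  assumes f: "f \<in> L2" and [measurable]: "k \<in> borel_measurable borel"
    and k_bound: "\<forall>t\<in>{0..x::real}. cmod (k t) \<le> C"
  shows "integrable lborel (\<lambda>t. indicator {0..x} t *\<^sub>R (k t * trunc01 f t))"
proof (rule Bochner_Integration.integrable_bound
    [OF integrable_mult_right[OF integrable_norm[OF trunc01_integrable[OF f]], of C]])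
  have "norm (indicator {0..x} t *\<^sub>R (k t * trunc01 f t)) \<le> norm (C * cmod (trunc01 f t))" for t
  proof (cases "t \<in> {0..x}")
    case True
    with k_bound have "cmod (k t) \<le> \<bar>C\<bar>" by force
    then show ?thesis using True by (simp add: norm_mult abs_mult mult_right_mono)
  qed simp
  then show "AE t in lborel. norm (indicator {0..x} t *\<^sub>R (k t * trunc01 f t)) \<le> norm (C * cmod (trunc01 f t))"
    by (intro AE_I2) simp
qed (use f in measurable)

text \<open>AM-GM, 2 |f t| \<le> 1 + |f t|^2, bounds the kernel integral by the L2 norm of f without
  needing Cauchy-Schwarz.\<close>

lemma norm_kernel_integral_le:
  assumes f: "f \<in> L2" and x: "x \<in> {0..1}" and [measurable]: "k \<in> borel_measurable borel"
    and k_bound: "\<forall>t\<in>{0..x}. cmod (k t) \<le> C"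
  shows "cmod (\<integral>t. indicator {0..x} t *\<^sub>R (k t * trunc01 f t) \<partial>lborel)
    \<le> C / 2 * (x + (\<integral>t. (cmod (f t))\<^sup>2 \<partial>M01))"
proof -
  have C: "0 \<le> C" using k_bound x by (metis atLeastAtMost_iff norm_ge_zero order.trans order_refl)
  have pointwise: "norm (indicator {0..x} t *\<^sub>R (k t * trunc01 f t))
      \<le> C / 2 * (indicator {0..x} t + (cmod (trunc01 f t))\<^sup>2)" for t
  proof (cases "t \<in> {0..x}")
    case True
    have "cmod (k t) * cmod (trunc01 f t) \<le> C * cmod (trunc01 f t)"
      using True k_bound by (simp add: mult_right_mono)
    also have "\<dots> \<le> C / 2 * (1 + (cmod (trunc01 f t))\<^sup>2)"
      using mult_left_mono[OF _ C, of "2 * cmod (trunc01 f t)" "1 + (cmod (trunc01 f t))\<^sup>2"]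
        zero_le_power2[of "cmod (trunc01 f t) - 1"]
      by (simp add: power2_diff)
    finally show ?thesis using True by (simp add: norm_mult)
  qed (use C in simp)
  have "cmod (\<integral>t. indicator {0..x} t *\<^sub>R (k t * trunc01 f t) \<partial>lborel)
      \<le> (\<integral>t. norm (indicator {0..x} t *\<^sub>R (k t * trunc01 f t)) \<partial>lborel)"
    by (rule integral_norm_bound)
  also have "\<dots> \<le> (\<integral>t. C / 2 * (indicator {0..x} t + (cmod (trunc01 f t))\<^sup>2) \<partial>lborel)"
    using integrable_kernel_trunc01[OF f _ k_bound] norm_trunc01_sq_integrable[OF f] pointwise
    by (intro integral_mono integrable_norm integrable_mult_right Bochner_Integration.integrable_add)
       (auto simp: emeasure_lborel_Icc_eq)
  also have "\<dots> = C / 2 * (x + (\<integral>t. (cmod (f t))\<^sup>2 \<partial>M01))"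
    using norm_trunc01_sq_integrable[OF f] x
    by (simp add: Bochner_Integration.integral_add emeasure_lborel_Icc_eq integral_norm_trunc01_sq)
  finally show ?thesis .
qed

lemma volterra_add_cmult_volterra_volterra:
  assumes f: "f \<in> L2" and x: "x \<in> {0..1}"
  shows "volterra f x + c * volterra (volterra f) x =
    (\<integral>t. indicator {0..x} t *\<^sub>R ((1 + c * complex_of_real (x - t)) * trunc01 f t) \<partial>lborel)"
proof -
  have [measurable]: "trunc01 f \<in> borel_measurable lborel" using f by (rule trunc01_measurable)
  have V_integrable: "integrable lborel (\<lambda>t. indicator {0..x} t *\<^sub>R trunc01 f t)"
    by (rule integrable_mult_indicator[OF _ trunc01_integrable[OF f]]) simp
  have VV_integrable: "integrable lborel (\<lambda>t. indicator {0..x} t *\<^sub>R (complex_of_real (x - t) * trunc01 f t))"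
    by (rule integrable_kernel_trunc01[OF f _, of _ x 1]) (use x in \<open>auto simp flip: of_real_diff\<close>)
  have "volterra f x + c * volterra (volterra f) x =
     (\<integral>t. indicator {0..x} t *\<^sub>R trunc01 f t \<partial>lborel)
     + (\<integral>t. c * (indicator {0..x} t *\<^sub>R (complex_of_real (x - t) * trunc01 f t)) \<partial>lborel)"
    unfolding volterra_eq_integral_trunc01[OF x, of f] volterra_volterra_eq_kernel_integral[OF f x]
      integral_mult_right_zero by (rule refl)
  also have "\<dots> = (\<integral>t. indicator {0..x} t *\<^sub>R trunc01 f t
      + c * (indicator {0..x} t *\<^sub>R (complex_of_real (x - t) * trunc01 f t)) \<partial>lborel)"
    by (rule Bochner_Integration.integral_add[symmetric, OF V_integrable integrable_mult_right[OF VV_integrable]])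
  also have "\<dots> = (\<integral>t. indicator {0..x} t *\<^sub>R ((1 + c * complex_of_real (x - t)) * trunc01 f t) \<partial>lborel)"
    by (rule Bochner_Integration.integral_cong) (auto simp: algebra_simps scaleR_conv_of_real)
  finally show ?thesis .
qed

lemma funpow_volterra_in_L2: "f \<in> L2 \<Longrightarrow> (volterra ^^ k) f \<in> L2"
  by (induction k) (simp_all add: volterra_in_L2)

lemma funpow_volterra_cong_AE:
  assumes "f \<in> L2" "g \<in> L2" "AE x in M01. f x = g x"
  shows "AE x in M01. (volterra ^^ k) f x = (volterra ^^ k) g x"
proof (induction k)
  case 0
  then show ?case using assms(3) by simp
next
  case (Suc k)
  then show ?case
    using volterra_cong_AE[OF funpow_volterra_in_L2[OF assms(1)] funpow_volterra_in_L2[OF assms(2)] Suc]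
    by (intro AE_I2) simp
qed

lemma poly_op_in_AV: assumes "poly p 0 = 0" shows "poly_op p \<in> AV"
proof -
  have in_L2: "poly_op p f \<in> L2" if "f \<in> L2" for f
    unfolding poly_op_def by (intro L2_sum L2_cmult funpow_volterra_in_L2 that)
  have cong: "AE x in M01. poly_op p f x = poly_op p g x"
    if "f \<in> L2" "g \<in> L2" "AE x in M01. f x = g x" for f g
  proof -
    have "AE x in M01. \<forall>k\<in>{..degree p}. (volterra ^^ k) f x = (volterra ^^ k) g x"
      using funpow_volterra_cong_AE[OF that] by (simp add: eventually_ball_finite_distrib)
    then show ?thesis by eventually_elim (simp add: poly_op_def)
  qed
  have approx: "l2norm (\<lambda>x. poly_op p f x - poly_op p f x) \<le> \<epsilon> * l2norm f" if "\<epsilon> > 0" for \<epsilon> f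
    using that l2norm_nonneg[of f] by (simp add: l2norm_def)
  have "\<forall>\<epsilon>>0. \<exists>q. poly q 0 = 0 \<and> (\<forall>f\<in>L2. l2norm (\<lambda>x. poly_op p f x - poly_op q f x) \<le> \<epsilon> * l2norm f)"
    using assms approx by blast
  then show ?thesis unfolding AV_def using in_L2 cong by blast
qed

lemma AV_maps_L2: "S \<in> AV \<Longrightarrow> f \<in> L2 \<Longrightarrow> S f \<in> L2"
  by (simp add: AV_def)

lemma AV_cong_AE:
  "S \<in> AV \<Longrightarrow> f \<in> L2 \<Longrightarrow> g \<in> L2 \<Longrightarrow> AE x in M01. f x = g x \<Longrightarrow> AE x in M01. S f x = S g x"
  by (simp add: AV_def)

lemma opeq_trans [trans]: "opeq P Q \<Longrightarrow> opeq Q R \<Longrightarrow> opeq P R"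
  unfolding opeq_def
proof
  fix f assume "\<forall>f\<in>L2. AE x in M01. P f x = Q f x" "\<forall>f\<in>L2. AE x in M01. Q f x = R f x" "f \<in> L2"
  then have "AE x in M01. P f x = Q f x" "AE x in M01. Q f x = R f x" by auto
  then show "AE x in M01. P f x = R f x" by eventually_elim simp
qed

lemma opeq_op_add: "opeq P P' \<Longrightarrow> opeq Q Q' \<Longrightarrow> opeq (op_add P Q) (op_add P' Q')"
  unfolding opeq_def
proof
  fix f assume "\<forall>f\<in>L2. AE x in M01. P f x = P' f x" "\<forall>f\<in>L2. AE x in M01. Q f x = Q' f x" "f \<in> L2"
  then have "AE x in M01. P f x = P' f x" "AE x in M01. Q f x = Q' f x" by auto
  then show "AE x in M01. op_add P Q f x = op_add P' Q' f x" by eventually_elim (simp add: op_add_def)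
qed

lemma opeq_op_scale: "opeq P P' \<Longrightarrow> opeq (op_scale c P) (op_scale c P')"
  unfolding opeq_def
proof
  fix f assume "\<forall>f\<in>L2. AE x in M01. P f x = P' f x" "f \<in> L2"
  then have "AE x in M01. P f x = P' f x" by auto
  then show "AE x in M01. op_scale c P f x = op_scale c P' f x" by eventually_elim (simp add: op_scale_def)
qed

lemma opeq_comp:
  assumes "opeq P P'" "opeq Q Q'" "\<And>f. f \<in> L2 \<Longrightarrow> Q f \<in> L2" "\<And>f. f \<in> L2 \<Longrightarrow> Q' f \<in> L2"
    and P_cong: "\<And>f g. f \<in> L2 \<Longrightarrow> g \<in> L2 \<Longrightarrow> AE x in M01. f x = g x \<Longrightarrow> AE x in M01. P f x = P g x"
  shows "opeq (P \<circ> Q) (P' \<circ> Q')"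
  unfolding opeq_def
proof
  fix f assume f: "f \<in> L2"
  have "AE x in M01. Q f x = Q' f x" using assms(2) f by (auto simp: opeq_def)
  then have "AE x in M01. P (Q f) x = P (Q' f) x" using P_cong assms(3,4) f by blast
  moreover have "AE x in M01. P (Q' f) x = P' (Q' f) x" using assms(1,4) f by (auto simp: opeq_def)
  ultimately show "AE x in M01. (P \<circ> Q) f x = (P' \<circ> Q') f x" by eventually_elim simp
qed

lemma opnorm_cong:
  assumes "opeq P Q" "\<And>f. f \<in> L2 \<Longrightarrow> P f \<in> L2" "\<And>f. f \<in> L2 \<Longrightarrow> Q f \<in> L2"
  shows "opnorm P = opnorm Q"
proof -
  have "l2norm (P f) = l2norm (Q f)" if "f \<in> L2" for f
    using assms that by (intro l2norm_cong_AE) (auto simp: opeq_def)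
  then have "{l2norm (P f) | f. f \<in> L2 \<and> l2norm f \<le> 1} = {l2norm (Q f) | f. f \<in> L2 \<and> l2norm f \<le> 1}"
    by (intro Collect_cong) metis
  then show ?thesis by (simp add: opnorm_def)
qed

definition sub_square :: "op \<Rightarrow> op" where
  "sub_square A = op_add A (op_scale (-1) (A \<circ> A))"

lemma opeq_sub_square_hom:
  assumes mem: "\<forall>S\<in>AV. g S \<in> AV"
    and add: "\<forall>S\<in>AV. \<forall>T\<in>AV. opeq (g (op_add S T)) (op_add (g S) (g T))"
    and scale: "\<forall>c. \<forall>S\<in>AV. opeq (g (op_scale c S)) (op_scale c (g S))"
    and comp: "\<forall>S\<in>AV. \<forall>T\<in>AV. opeq (g (S \<circ> T)) (g S \<circ> g T)"
    and A: "A \<in> AV" "A \<circ> A \<in> AV" "op_scale (-1) (A \<circ> A) \<in> AV"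
    and gA: "opeq (g A) B" and B: "\<And>f. f \<in> L2 \<Longrightarrow> B f \<in> L2"
  shows "opeq (g (sub_square A)) (sub_square B)"
proof -
  have gA_AV: "g A \<in> AV" using mem A(1) by blast
  have "opeq (g (sub_square A)) (op_add (g A) (g (op_scale (-1) (A \<circ> A))))"
    unfolding sub_square_def using add A(1,3) by blast
  also have "opeq \<dots> (sub_square B)"
    unfolding sub_square_def
  proof (rule opeq_op_add[OF gA])
    have "opeq (g (op_scale (-1) (A \<circ> A))) (op_scale (-1) (g (A \<circ> A)))"
      using scale A(2) by blast
    also have "opeq \<dots> (op_scale (-1) (g A \<circ> g A))"
      using comp A(1) by (simp add: opeq_op_scale)
    also have "opeq \<dots> (op_scale (-1) (B \<circ> B))"
      using gA gA AV_maps_L2[OF gA_AV] B AV_cong_AE[OF gA_AV] by (rule opeq_op_scale[OF opeq_comp])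
    finally show "opeq (g (op_scale (-1) (A \<circ> A))) (op_scale (-1) (B \<circ> B))" .
  qed
  finally show ?thesis .
qed

lemma volterra_eq_poly_op: "volterra = poly_op [:0, 1:]"
  by (simp add: fun_eq_iff poly_op_def atMost_Suc)

lemma poly_op_degree_two:
  "c \<noteq> 0 \<Longrightarrow> poly_op [:0, b, c:] f x = b * volterra f x + c * volterra (volterra f) x"
  by (simp add: poly_op_def numeral_2_eq_2 atMost_Suc)

lemma volterra_square_in_AV: "volterra \<circ> volterra \<in> AV"
proof -
  have "volterra \<circ> volterra = poly_op [:0, 0, 1:]"
    by (simp add: fun_eq_iff poly_op_degree_two)
  then show ?thesis by (simp add: poly_op_in_AV)
qed

lemma neg_volterra_square_in_AV: "op_scale (-1) (volterra \<circ> volterra) \<in> AV"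
proof -
  have "op_scale (-1) (volterra \<circ> volterra) = poly_op [:0, 0, -1:]"
    by (simp add: fun_eq_iff poly_op_degree_two op_scale_def)
  then show ?thesis by (simp add: poly_op_in_AV)
qed

lemma sub_square_volterra_apply:
  "sub_square volterra f x = volterra f x + (-1) * volterra (volterra f) x"
  by (simp add: sub_square_def op_add_def op_scale_def)

lemma sub_square_neg_volterra_apply:
  "sub_square (op_scale (-1) volterra) f x = - (volterra f x + 1 * volterra (volterra f) x)"
  by (simp add: sub_square_def op_add_def op_scale_def volterra_uminus)

lemma sub_square_volterra_in_AV: "sub_square volterra \<in> AV"
proof -
  have "sub_square volterra = poly_op [:0, 1, -1:]"
    by (simp add: fun_eq_iff poly_op_degree_two sub_square_volterra_apply)
  then show ?thesis by (simp add: poly_op_in_AV)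
qed

lemma sub_square_neg_volterra_in_AV: "sub_square (op_scale (-1) volterra) \<in> AV"
proof -
  have "sub_square (op_scale (-1) volterra) = poly_op [:0, -1, -1:]"
    by (simp add: fun_eq_iff poly_op_degree_two sub_square_neg_volterra_apply)
  then show ?thesis by (simp add: poly_op_in_AV)
qed

lemma integral_M01_half_succ_square: "(\<integral>x. ((x + 1) / 2)\<^sup>2 \<partial>M01) = 7 / 12"
proof -
  have "(\<integral>x. ((x + 1) / 2)\<^sup>2 * indicator {0..1} x \<partial>lborel)
      = (\<lambda>x::real. (x + 1) ^ 3 / 12) 1 - (\<lambda>x::real. (x + 1) ^ 3 / 12) 0"
  proof (rule integral_FTC_Icc_real)
    show "((\<lambda>x::real. (x + 1) ^ 3 / 12) has_real_derivative ((x + 1) / 2)\<^sup>2) (at x)" for x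
      by (auto intro!: derivative_eq_intros simp: power2_eq_square field_simps)
    show "isCont (\<lambda>x::real. ((x + 1) / 2)\<^sup>2) x" for x
      by (intro continuous_intros) auto
  qed simp
  then show ?thesis by (simp add: integral_M01_eq_lborel)
qed

lemma integral_M01_square_add_half_square: "(\<integral>x. (x + x\<^sup>2 / 2)\<^sup>2 \<partial>M01) = 19 / 30"
proof -
  have "(\<integral>x. (x + x\<^sup>2 / 2)\<^sup>2 * indicator {0..1} x \<partial>lborel)
      = (\<lambda>x::real. x ^ 3 / 3 + x ^ 4 / 4 + x ^ 5 / 20) 1 - (\<lambda>x::real. x ^ 3 / 3 + x ^ 4 / 4 + x ^ 5 / 20) 0"
  proof (rule integral_FTC_Icc_real)
    show "((\<lambda>x::real. x ^ 3 / 3 + x ^ 4 / 4 + x ^ 5 / 20) has_real_derivative (x + x\<^sup>2 / 2)\<^sup>2) (at x)" for x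
      by (auto intro!: derivative_eq_intros simp: power2_eq_square field_simps eval_nat_numeral)
    show "isCont (\<lambda>x::real. (x + x\<^sup>2 / 2)\<^sup>2) x" for x
      by (intro continuous_intros) auto
  qed simp
  then show ?thesis by (simp add: integral_M01_eq_lborel)
qed

lemma integral_norm_sq_le_one: "l2norm f \<le> 1 \<Longrightarrow> (\<integral>t. (cmod (f t))\<^sup>2 \<partial>M01) \<le> 1"
  by (simp add: l2norm_def)

lemma norm_sub_square_volterra_le:
  assumes f: "f \<in> L2" "l2norm f \<le> 1" and x: "x \<in> {0..1}"
  shows "cmod (sub_square volterra f x) \<le> (x + 1) / 2"
proof -
  have "sub_square volterra f x
      = (\<integral>t. indicator {0..x} t *\<^sub>R (complex_of_real (1 - (x - t)) * trunc01 f t) \<partial>lborel)"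
    unfolding sub_square_volterra_apply volterra_add_cmult_volterra_volterra[OF f(1) x]
    by (simp add: algebra_simps)
  also have "cmod \<dots> \<le> 1 / 2 * (x + (\<integral>t. (cmod (f t))\<^sup>2 \<partial>M01))"
  proof (rule norm_kernel_integral_le[OF f(1) x])
    show "\<forall>t\<in>{0..x}. cmod (complex_of_real (1 - (x - t))) \<le> 1"
      using x by (simp only: norm_of_real) auto
  qed simp
  also have "\<dots> \<le> (x + 1) / 2"
    using integral_norm_sq_le_one[OF f(2)] by simp
  finally show ?thesis .
qed

lemma norm_sub_square_neg_volterra_le:
  assumes f: "f \<in> L2" "l2norm f \<le> 1" and x: "x \<in> {0..1}"
  shows "cmod (sub_square (op_scale (-1) volterra) f x) \<le> x + 1"
proof -
  have "cmod (sub_square (op_scale (-1) volterra) f x)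
      = cmod (\<integral>t. indicator {0..x} t *\<^sub>R (complex_of_real (1 + (x - t)) * trunc01 f t) \<partial>lborel)"
    unfolding sub_square_neg_volterra_apply norm_minus_cancel
      volterra_add_cmult_volterra_volterra[OF f(1) x] by simp
  also have "\<dots> \<le> 2 / 2 * (x + (\<integral>t. (cmod (f t))\<^sup>2 \<partial>M01))"
  proof (rule norm_kernel_integral_le[OF f(1) x])
    show "\<forall>t\<in>{0..x}. cmod (complex_of_real (1 + (x - t))) \<le> 2"
      using x by (simp only: norm_of_real) auto
  qed simp
  also have "\<dots> \<le> x + 1"
    using integral_norm_sq_le_one[OF f(2)] by simp
  finally show ?thesis .
qed

lemma opnorm_sub_square_volterra_le: "opnorm (sub_square volterra) \<le> sqrt (7 / 12)"
  unfolding opnorm_def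
proof (rule cSup_least)
  have "l2norm (\<lambda>x. 0) = 0" by (simp add: l2norm_def)
  then show "{l2norm (sub_square volterra f) |f. f \<in> L2 \<and> l2norm f \<le> 1} \<noteq> {}"
    using L2_zero by force
  fix y assume "y \<in> {l2norm (sub_square volterra f) |f. f \<in> L2 \<and> l2norm f \<le> 1}"
  then obtain f where f: "f \<in> L2" "l2norm f \<le> 1" and y: "y = l2norm (sub_square volterra f)"
    by blast
  have "integrable M01 (\<lambda>x. ((x + 1) / 2)\<^sup>2)"
  proof (rule finite_measure.integrable_const_bound[OF finite_measure_M01, where B=1])
    show "AE x in M01. norm (((x + 1) / 2)\<^sup>2) \<le> (1::real)"
      by (intro AE_I2) (auto simp: power_le_one)
    show "(\<lambda>x. ((x + 1) / 2)\<^sup>2) \<in> borel_measurable M01"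
      by (intro measurable_M01_of_borel) measurable
  qed
  then have "l2norm (sub_square volterra f) \<le> sqrt (\<integral>x. ((x + 1) / 2)\<^sup>2 \<partial>M01)"
    using f sub_square_volterra_in_AV norm_sub_square_volterra_le
    by (intro l2norm_le_of_pointwise) (auto simp: AV_maps_L2)
  then show "y \<le> sqrt (7 / 12)"
    using y by (simp add: integral_M01_half_succ_square)
qed

lemma volterra_one: "0 \<le> y \<Longrightarrow> volterra (\<lambda>_. 1) y = complex_of_real y"
  by (simp add: volterra_eq_integral_indicator scaleR_conv_of_real integral_Icc_indicator)

lemma volterra_volterra_one: "0 \<le> x \<Longrightarrow> volterra (volterra (\<lambda>_. 1)) x = complex_of_real (x\<^sup>2 / 2)"
proof -
  assume x: "0 \<le> x"
  have "volterra (volterra (\<lambda>_. 1)) x = (\<integral>t. complex_of_real (t ^ 1 * indicator {0..x} t) \<partial>lborel)"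
    unfolding volterra_eq_integral_indicator[of "volterra (\<lambda>_. 1)"]
    by (intro Bochner_Integration.integral_cong)
       (auto simp: volterra_one scaleR_conv_of_real indicator_def)
  also have "\<dots> = complex_of_real (x\<^sup>2 / 2)"
    using integral_power[of 0 x 1] x by (simp only: integral_complex_of_real) (simp add: power2_eq_square)
  finally show ?thesis .
qed

lemma l2norm_sub_square_neg_volterra_one:
  "l2norm (sub_square (op_scale (-1) volterra) (\<lambda>_. 1)) = sqrt (19 / 30)"
proof -
  have "(cmod (sub_square (op_scale (-1) volterra) (\<lambda>_. 1) x))\<^sup>2 = (x + x\<^sup>2 / 2)\<^sup>2" if "x \<in> {0..1}" for x
  proof -
    have "sub_square (op_scale (-1) volterra) (\<lambda>_. 1) x = - complex_of_real (x + x\<^sup>2 / 2)"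
      using that by (simp add: sub_square_neg_volterra_apply volterra_one volterra_volterra_one)
    then show ?thesis using that by (simp only: norm_minus_cancel norm_of_real) simp
  qed
  then have "(\<integral>x. (cmod (sub_square (op_scale (-1) volterra) (\<lambda>_. 1) x))\<^sup>2 \<partial>M01) = (\<integral>x. (x + x\<^sup>2 / 2)\<^sup>2 \<partial>M01)"
    by (intro Bochner_Integration.integral_cong) auto
  then show ?thesis by (simp add: l2norm_def integral_M01_square_add_half_square)
qed

lemma opnorm_sub_square_neg_volterra_ge: "sqrt (19 / 30) \<le> opnorm (sub_square (op_scale (-1) volterra))"
  unfolding opnorm_def
proof (rule cSup_upper)
  have "(\<lambda>_. 1) \<in> L2" by (rule L2_of_bounded[where B=1]) auto
  moreover have "l2norm (\<lambda>_. 1) = 1" by (simp add: l2norm_def)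
  ultimately show "sqrt (19 / 30) \<in> {l2norm (sub_square (op_scale (-1) volterra) f) |f. f \<in> L2 \<and> l2norm f \<le> 1}"
    using l2norm_sub_square_neg_volterra_one by (metis (mono_tags, lifting) mem_Collect_eq order_refl)
  have bound: "l2norm (sub_square (op_scale (-1) volterra) f) \<le> 2" if "f \<in> L2" "l2norm f \<le> 1" for f
  proof -
    have "cmod (sub_square (op_scale (-1) volterra) f x) \<le> 2" if "x \<in> {0..1}" for x
      using norm_sub_square_neg_volterra_le[OF \<open>f \<in> L2\<close> \<open>l2norm f \<le> 1\<close> that] that
      unfolding atLeastAtMost_iff by linarith
    then have "l2norm (sub_square (op_scale (-1) volterra) f) \<le> sqrt (\<integral>x. 2\<^sup>2 \<partial>M01)"
      using that(1) sub_square_neg_volterra_in_AV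
      by (intro l2norm_le_of_pointwise) (auto simp: AV_maps_L2 finite_measure.integrable_const[OF finite_measure_M01])
    then show ?thesis by simp
  qed
  show "bdd_above {l2norm (sub_square (op_scale (-1) volterra) f) |f. f \<in> L2 \<and> l2norm f \<le> 1}"
    by (rule bdd_aboveI[where M=2]) (auto intro: bound)
qed

lemma no_isometric_automorphism_negating_volterra:
  assumes mem: "\<forall>S\<in>AV. g S \<in> AV"
    and add: "\<forall>S\<in>AV. \<forall>T\<in>AV. opeq (g (op_add S T)) (op_add (g S) (g T))"
    and scale: "\<forall>c. \<forall>S\<in>AV. opeq (g (op_scale c S)) (op_scale c (g S))"
    and comp: "\<forall>S\<in>AV. \<forall>T\<in>AV. opeq (g (S \<circ> T)) (g S \<circ> g T)"
    and isometric: "\<forall>S\<in>AV. opnorm (g S) = opnorm S"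
    and negating: "opeq (g volterra) (op_scale (-1) volterra)"
  shows False
proof -
  have V_AV: "volterra \<in> AV" by (simp add: volterra_eq_poly_op poly_op_in_AV)
  have neg_V_L2: "op_scale (-1) volterra f \<in> L2" if "f \<in> L2" for f
    unfolding op_scale_def by (rule L2_cmult[OF volterra_in_L2[OF that]])
  have gS_AV: "g (sub_square volterra) \<in> AV"
    using mem sub_square_volterra_in_AV by (rule bspec)
  have "opeq (g (sub_square volterra)) (sub_square (op_scale (-1) volterra))"
    by (rule opeq_sub_square_hom[where A=volterra and B="op_scale (-1) volterra",
        OF mem add scale comp V_AV volterra_square_in_AV neg_volterra_square_in_AV negating neg_V_L2])
  then have "opnorm (sub_square (op_scale (-1) volterra)) = opnorm (g (sub_square volterra))"
    by (rule opnorm_cong[symmetric, OF _ AV_maps_L2[OF gS_AV] AV_maps_L2[OF sub_square_neg_volterra_in_AV]])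
  also have "\<dots> = opnorm (sub_square volterra)"
    using isometric sub_square_volterra_in_AV by (rule bspec)
  finally have "sqrt (19 / 30) \<le> sqrt (7 / 12)"
    using opnorm_sub_square_volterra_le opnorm_sub_square_neg_volterra_ge by linarith
  then show False by simp
qed

theorem mainTheorem16:
  shows "\<not> (\<exists>\<gamma>. gauge_action \<gamma>)"
proof
  assume "\<exists>\<gamma>. gauge_action \<gamma>"
  then obtain \<gamma> where \<gamma>: "gauge_action \<gamma>" by blast
  have "cmod (-1 :: complex) = 1" by simp
  from \<gamma>[unfolded gauge_action_def, THEN conjunct1, rule_format, OF this] show False
    by (elim conjE) (rule no_isometric_automorphism_negating_volterra[of "\<gamma> (-1)"])
qed

end
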